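(* Let $G$ be a finite simple graph with edge weight function $w$ and vertex weight function $w_1$, and let $u,v$ be distinct vertices of $G$. Writing $\eta=\eta_{(w,w_1)}$, $$\eta(G\setminus u,x)\,\eta(G\setminus v,x)-\eta(G,x)\,\eta(G\setminus uv,x)=\sum_{p\in P_{uv}(G)}\big(|w(p)|\,\eta(G\setminus p,x)\big)^2,$$ where $P_{uv}(G)$ is the set of all paths in $G$ with endpoints $u$ and $v$, $|w(p)|=\prod_{e\in E(p)}|w(e)|$, and $G\setminus p$ denotes $G$ with all vertices of $p$ deleted.
   Context: An edge weight function $w$ assigns a nonzero complex number to each edge; a vertex weight function $w_1$ assigns a real number (possibly $0$) to each vertex; subgraphs carry restricted weights; deleting vertices also deletes incident edges, and $G\setminus uv$ deletes both $u$ and $v$. For $A\subseteq E(G)$, $w(A)=\prod_{e\in A}w(e)$. $\mu_w(G,x)=\sum_{M}(-1)^{|M|}|w(M)|^2x^{n-2|M|}$ over all matchings $M$ (including empty). $\eta_{(w,w_1)}(G,x)=\sum_{S\subseteq V(G)}(-1)^{|V(G)\setminus S|}\big(\prod_{y\in V(G)\setminus S}w_1(y)\big)\mu_w(G[S],x)$ with $G[S]$ the induced subgraph; $\mu_w,\eta_{(w,w_1)}$ of the empty graph equal $1$. *)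

theory Defs
  imports Complex_Main
begin

definition simple_graph :: "'a set \<Rightarrow> 'a set set \<Rightarrow> bool" where
  "simple_graph V E \<longleftrightarrow> finite V \<and> (\<forall>e\<in>E. \<exists>a b. a \<noteq> b \<and> a \<in> V \<and> b \<in> V \<and> e = {a, b})"

definition induced_edges :: "'a set set \<Rightarrow> 'a set \<Rightarrow> 'a set set" where
  "induced_edges E S = {e \<in> E. e \<subseteq> S}"

definition matching :: "'a set set \<Rightarrow> 'a set set \<Rightarrow> bool" where
  "matching E M \<longleftrightarrow> M \<subseteq> E \<and> (\<forall>e1\<in>M. \<forall>e2\<in>M. e1 \<noteq> e2 \<longrightarrow> e1 \<inter> e2 = {})"

definition mu_w :: "'a set \<Rightarrow> 'a set set \<Rightarrow> ('a set \<Rightarrow> complex) \<Rightarrow> real \<Rightarrow> real" where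
  "mu_w V E w x = (\<Sum>M\<in>{M. matching E M}.
      (-1) ^ card M * (\<Prod>e\<in>M. cmod (w e)) ^ 2 * x ^ (card V - 2 * card M))"

definition eta_w :: "'a set \<Rightarrow> 'a set set \<Rightarrow> ('a set \<Rightarrow> complex) \<Rightarrow> ('a \<Rightarrow> real) \<Rightarrow> real \<Rightarrow> real" where
  "eta_w V E w w1 x = (\<Sum>S\<in>Pow V.
      (-1) ^ card (V - S) * (\<Prod>y\<in>V - S. w1 y) * mu_w S (induced_edges E S) w x)"

definition eta_del :: "'a set \<Rightarrow> 'a set set \<Rightarrow> ('a set \<Rightarrow> complex) \<Rightarrow> ('a \<Rightarrow> real) \<Rightarrow> 'a set \<Rightarrow> real \<Rightarrow> real" where
  "eta_del V E w w1 X x = eta_w (V - X) (induced_edges E (V - X)) w w1 x"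

text \<open>Paths from u to v, given as vertex lists starting at u and ending at v
  (for u \<noteq> v each path subgraph corresponds to exactly one such list).\<close>
definition paths :: "'a set set \<Rightarrow> 'a \<Rightarrow> 'a \<Rightarrow> 'a list set" where
  "paths E u v = {ps. ps \<noteq> [] \<and> distinct ps \<and> hd ps = u \<and> last ps = v \<and>
      (\<forall>i. Suc i < length ps \<longrightarrow> {ps ! i, ps ! Suc i} \<in> E)}"

definition path_weight :: "('a set \<Rightarrow> complex) \<Rightarrow> 'a list \<Rightarrow> real" where
  "path_weight w ps = (\<Prod>i<length ps - 1. cmod (w {ps ! i, ps ! Suc i}))"

end

theory Submission
  imports Defs
begin

text \<open>
  Expanding the sum over vertex subsets turns eta(G[S], x) into the matching sum
  Q(S) = Sum_M (-1)^|M| |w(M)|^2 Prod_{y in S not covered by M} z(y)  with  z(y) = x - w1(y),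
  a matching polynomial in which every uncovered vertex carries its own weight.  Sorting the
  matchings by the edge that covers a vertex u gives the expansion
  Q(S) = z(u) Q(S - u) - Sum_{i ~ u} |w(ui)|^2 Q(S - u - i).
  Expanding both Q(S) and Q(S - v) along u, the left-hand side becomes Sum_{i ~ u} |w(ui)|^2
  times the left-hand side for S - u and the pair i, v (for i = v, the square Q(S - u - v)^2).
  The paths from u to v split in the same way according to their second vertex i, so the
  identity follows by induction on S, as does the Heilmann-Lieb identity for the matching polynomial.
\<close>

definition matchings_on :: "'a set set \<Rightarrow> 'a set \<Rightarrow> 'a set set set" where
  "matchings_on E S = {M. matching (induced_edges E S) M}"

definition matching_sum ::
    "'a set set \<Rightarrow> ('a set \<Rightarrow> complex) \<Rightarrow> ('a \<Rightarrow> real) \<Rightarrow> 'a set \<Rightarrow> real" where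
  "matching_sum E w z S = (\<Sum>M\<in>matchings_on E S.
      (-1) ^ card M * (\<Prod>e\<in>M. cmod (w e)) ^ 2 * (\<Prod>y\<in>S - \<Union>M. z y))"

lemma induced_edges_induced_edges:
  "T \<subseteq> S \<Longrightarrow> induced_edges (induced_edges E S) T = induced_edges E T"
  unfolding induced_edges_def by auto

lemma doubleton_in_edges_neq:
  "\<forall>e\<in>E. card e = 2 \<Longrightarrow> {u, i} \<in> E \<Longrightarrow> i \<noteq> u"
  by fastforce

lemma finite_matchings_on: "finite S \<Longrightarrow> finite (matchings_on E S)"
  unfolding matchings_on_def matching_def induced_edges_def
  by (rule finite_subset[of _ "Pow (Pow S)"]) auto

lemma finite_matching_on: "finite S \<Longrightarrow> M \<in> matchings_on E S \<Longrightarrow> finite M"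
  unfolding matchings_on_def matching_def induced_edges_def
  by (rule finite_subset[of _ "Pow S"]) auto

lemma matchings_on_Union_subset: "M \<in> matchings_on E S \<Longrightarrow> \<Union>M \<subseteq> S"
  unfolding matchings_on_def matching_def induced_edges_def by auto

lemma matchings_on_mono_iff:
  "T \<subseteq> S \<Longrightarrow> M \<in> matchings_on E T \<longleftrightarrow> M \<in> matchings_on E S \<and> \<Union>M \<subseteq> T"
  unfolding matchings_on_def matching_def induced_edges_def by auto

lemma card_Union_matching_on:
  assumes "\<forall>e\<in>E. card e = 2" "M \<in> matchings_on E S"
  shows "card (\<Union>M) = 2 * card M"
proof -
  have card_edge: "card e = 2" if "e \<in> M" for e
    using that assms(1,2) unfolding matchings_on_def matching_def induced_edges_def by auto
  then have "finite e" if "e \<in> M" for e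
    using that by (metis card.infinite zero_neq_numeral)
  moreover have "pairwise disjnt M"
    using assms(2) unfolding matchings_on_def matching_def pairwise_def disjnt_def by auto
  ultimately have "card (\<Union>M) = sum card M"
    by (intro card_Union_disjoint)
  then show ?thesis
    using card_edge by simp
qed

lemma sum_supersets_signed_prod:
  fixes c :: "'a \<Rightarrow> 'b::comm_ring_1"
  assumes "finite S" "U \<subseteq> S"
  shows "(\<Sum>T\<in>{T\<in>Pow S. U \<subseteq> T}. (-1) ^ card (S - T) * (\<Prod>y\<in>S - T. c y) * x ^ (card T - card U))
       = (\<Prod>y\<in>S - U. x - c y)"
proof -
  let ?R = "S - U"
  have "(\<Sum>T\<in>{T\<in>Pow S. U \<subseteq> T}. (-1) ^ card (S - T) * (\<Prod>y\<in>S - T. c y) * x ^ (card T - card U))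
      = (\<Sum>B\<in>Pow ?R. (-1) ^ card (S - (U \<union> B)) * (\<Prod>y\<in>S - (U \<union> B). c y) * x ^ (card (U \<union> B) - card U))"
  proof (rule sum.reindex_bij_witness[of _ "(\<union>) U" "\<lambda>T. T - U"])
  qed (use assms(2) in \<open>auto simp: Un_absorb1\<close>)
  also have "\<dots> = (\<Sum>B\<in>Pow ?R. (\<Prod>y\<in>B. x) * (\<Prod>y\<in>?R - B. - c y))"
  proof (rule sum.cong[OF refl])
    fix B assume B: "B \<in> Pow ?R"
    have "S - (U \<union> B) = ?R - B"
      by auto
    moreover have "card (U \<union> B) - card U = card B"
      using B assms finite_subset by (subst card_Un_disjoint) auto
    ultimately show "(-1) ^ card (S - (U \<union> B)) * (\<Prod>y\<in>S - (U \<union> B). c y) * x ^ (card (U \<union> B) - card U)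
      = (\<Prod>y\<in>B. x) * (\<Prod>y\<in>?R - B. - c y)"
      by (simp add: prod_uminus)
  qed
  also have "\<dots> = (\<Prod>y\<in>?R. x + - c y)"
    using assms(1) by (subst prod_add) simp_all
  finally show ?thesis
    by simp
qed

lemma mu_w_induced_edges:
  assumes "\<forall>e\<in>E. card e = 2" "finite T"
  shows "mu_w T (induced_edges E T) w x = (\<Sum>M\<in>matchings_on E T.
           (-1) ^ card M * (\<Prod>e\<in>M. cmod (w e)) ^ 2 * x ^ (card T - card (\<Union>M)))"
  unfolding mu_w_def matchings_on_def[symmetric]
  using card_Union_matching_on[OF assms(1)] by (intro sum.cong) auto

lemma eta_w_eq_matching_sum:
  assumes "\<forall>e\<in>E. card e = 2" "finite S"
  shows "eta_w S (induced_edges E S) w w1 x = matching_sum E w (\<lambda>y. x - w1 y) S"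
proof -
  let ?s = "\<lambda>M. (-1) ^ card M * (\<Prod>e\<in>M. cmod (w e)) ^ 2"
  let ?c = "\<lambda>T. (-1) ^ card (S - T) * (\<Prod>y\<in>S - T. w1 y)"
  have mu: "mu_w T (induced_edges (induced_edges E S) T) w x
      = (\<Sum>M\<in>{M\<in>matchings_on E S. \<Union>M \<subseteq> T}. ?s M * x ^ (card T - card (\<Union>M)))"
    if "T \<in> Pow S" for T
  proof -
    have "matchings_on E T = {M\<in>matchings_on E S. \<Union>M \<subseteq> T}"
      using that matchings_on_mono_iff[where E = E and T = T and S = S] by auto
    moreover have "finite T"
      using that assms(2) finite_subset by blast
    ultimately show ?thesis
      using that assms(1) by (simp add: induced_edges_induced_edges mu_w_induced_edges)
  qed
  have "eta_w S (induced_edges E S) w w1 x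
     = (\<Sum>T\<in>Pow S. \<Sum>M\<in>{M\<in>matchings_on E S. \<Union>M \<subseteq> T}. ?c T * (?s M * x ^ (card T - card (\<Union>M))))"
    unfolding eta_w_def by (intro sum.cong refl) (simp add: mu sum_distrib_left)
  also have "\<dots> = (\<Sum>M\<in>matchings_on E S.
      \<Sum>T\<in>{T\<in>Pow S. \<Union>M \<subseteq> T}. ?c T * (?s M * x ^ (card T - card (\<Union>M))))"
    by (rule sum.swap_restrict) (use assms finite_matchings_on in auto)
  also have "\<dots> = (\<Sum>M\<in>matchings_on E S. ?s M * (\<Prod>y\<in>S - \<Union>M. x - w1 y))"
  proof (rule sum.cong[OF refl])
    fix M assume "M \<in> matchings_on E S"
    have "(\<Sum>T\<in>{T\<in>Pow S. \<Union>M \<subseteq> T}. ?c T * (?s M * x ^ (card T - card (\<Union>M))))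
        = ?s M * (\<Sum>T\<in>{T\<in>Pow S. \<Union>M \<subseteq> T}. ?c T * x ^ (card T - card (\<Union>M)))"
      by (simp add: sum_distrib_left mult_ac)
    also have "\<dots> = ?s M * (\<Prod>y\<in>S - \<Union>M. x - w1 y)"
      using sum_supersets_signed_prod[OF assms(2) matchings_on_Union_subset[OF \<open>M \<in> _\<close>], of w1 x]
      by simp
    finally show "(\<Sum>T\<in>{T\<in>Pow S. \<Union>M \<subseteq> T}. ?c T * (?s M * x ^ (card T - card (\<Union>M))))
        = ?s M * (\<Prod>y\<in>S - \<Union>M. x - w1 y)" .
  qed
  finally show ?thesis
    unfolding matching_sum_def by simp
qed

lemma matchings_on_avoiding:
  "{M\<in>matchings_on E S. u \<notin> \<Union>M} = matchings_on E (S - {u})"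
  unfolding matchings_on_def matching_def induced_edges_def by blast

lemma matchings_on_covering:
  assumes two: "\<forall>e\<in>E. card e = 2" and "u \<in> S"
  shows "{M\<in>matchings_on E S. u \<in> \<Union>M}
       = (\<Union>i\<in>{i\<in>S. {u, i}\<in>E}. insert {u, i} ` matchings_on E (S - {u, i}))"
proof (intro equalityI subsetI)
  fix M assume M: "M \<in> {M\<in>matchings_on E S. u \<in> \<Union>M}"
  then obtain e where e: "e \<in> M" "u \<in> e"
    by auto
  have "e \<in> E" "e \<subseteq> S"
    using M e unfolding matchings_on_def matching_def induced_edges_def by auto
  then obtain i where i: "e = {u, i}"
    using two e(2) card_2_iff by (metis insert_commute insertE singletonD)
  have "f \<inter> {u, i} = {}" if "f \<in> M - {e}" for f
    using M e that i unfolding matchings_on_def matching_def by auto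
  then have "M - {e} \<in> matchings_on E (S - {u, i})"
    using M unfolding matchings_on_def matching_def induced_edges_def by auto
  moreover have "M = insert {u, i} (M - {e})"
    using e i by auto
  ultimately show "M \<in> (\<Union>i\<in>{i\<in>S. {u, i}\<in>E}. insert {u, i} ` matchings_on E (S - {u, i}))"
    using \<open>e \<in> E\<close> \<open>e \<subseteq> S\<close> i by blast
next
  fix M assume "M \<in> (\<Union>i\<in>{i\<in>S. {u, i}\<in>E}. insert {u, i} ` matchings_on E (S - {u, i}))"
  then obtain i M' where "i \<in> S" "{u, i} \<in> E" and M': "M' \<in> matchings_on E (S - {u, i})"
    and "M = insert {u, i} M'"
    by auto
  moreover have "\<forall>f\<in>M'. f \<inter> {u, i} = {}"
    using matchings_on_Union_subset[OF M'] by blast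
  ultimately show "M \<in> {M\<in>matchings_on E S. u \<in> \<Union>M}"
    using M' \<open>u \<in> S\<close> unfolding matchings_on_def matching_def induced_edges_def
    by (auto simp: Int_commute)
qed

lemma matching_sum_expand_vertex:
  assumes two: "\<forall>e\<in>E. card e = 2" and fin: "finite S" and "u \<in> S"
  shows "matching_sum E w z S = z u * matching_sum E w z (S - {u})
     - (\<Sum>i\<in>{i\<in>S. {u, i}\<in>E}. cmod (w {u, i}) ^ 2 * matching_sum E w z (S - {u, i}))"
proof -
  define f where "f T M = (-1) ^ card M * (\<Prod>e\<in>M. cmod (w e)) ^ 2 * (\<Prod>y\<in>T - \<Union>M. z y)"
    for T M
  have Q: "matching_sum E w z T = (\<Sum>M\<in>matchings_on E T. f T M)" for T
    unfolding matching_sum_def f_def ..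
  let ?N = "{i\<in>S. {u, i}\<in>E}"
  let ?I = "\<lambda>i. insert {u, i} ` matchings_on E (S - {u, i})"
  have sum_covering_edge: "(\<Sum>M\<in>?I i. f S M) = - (cmod (w {u, i}) ^ 2 * matching_sum E w z (S - {u, i}))" for i
  proof -
    have fresh: "{u, i} \<notin> M" if "M \<in> matchings_on E (S - {u, i})" for M
      using matchings_on_Union_subset[OF that] by auto
    then have "inj_on (insert {u, i}) (matchings_on E (S - {u, i}))"
      unfolding inj_on_def by (metis insert_ident)
    then have "(\<Sum>M\<in>?I i. f S M) = (\<Sum>M\<in>matchings_on E (S - {u, i}). f S (insert {u, i} M))"
      by (simp add: sum.reindex)
    also have "\<dots> = (\<Sum>M\<in>matchings_on E (S - {u, i}). - (cmod (w {u, i}) ^ 2 * f (S - {u, i}) M))"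
    proof (rule sum.cong[OF refl])
      fix M assume M: "M \<in> matchings_on E (S - {u, i})"
      have "S - \<Union>(insert {u, i} M) = S - {u, i} - \<Union>M"
        by auto
      then show "f S (insert {u, i} M) = - (cmod (w {u, i}) ^ 2 * f (S - {u, i}) M)"
        unfolding f_def using finite_matching_on[OF _ M] fin fresh[OF M]
        by (simp add: power_mult_distrib)
    qed
    finally show ?thesis
      by (simp add: Q sum_negf sum_distrib_left)
  qed
  have "matching_sum E w z S
      = (\<Sum>M\<in>{M\<in>matchings_on E S. u \<notin> \<Union>M}. f S M)
      + (\<Sum>M\<in>{M\<in>matchings_on E S. u \<in> \<Union>M}. f S M)"
    unfolding Q using finite_matchings_on[OF fin]
    by (subst sum.Int_Diff[where B = "{M. u \<notin> \<Union>M}"]) (auto simp: Int_def set_diff_eq)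
  also have "(\<Sum>M\<in>{M\<in>matchings_on E S. u \<notin> \<Union>M}. f S M) = z u * matching_sum E w z (S - {u})"
    unfolding matchings_on_avoiding Q sum_distrib_left
  proof (rule sum.cong[OF refl])
    fix M assume "M \<in> matchings_on E (S - {u})"
    then have "S - \<Union>M = insert u (S - {u} - \<Union>M)"
      using matchings_on_Union_subset \<open>u \<in> S\<close> by blast
    then show "f S M = z u * f (S - {u}) M"
      unfolding f_def using fin by (simp add: mult_ac)
  qed
  also have "(\<Sum>M\<in>{M\<in>matchings_on E S. u \<in> \<Union>M}. f S M) = (\<Sum>i\<in>?N. \<Sum>M\<in>?I i. f S M)"
    unfolding matchings_on_covering[OF two \<open>u \<in> S\<close>]
  proof (rule sum.UNION_disjoint)
    show "finite ?N" "\<forall>i\<in>?N. finite (?I i)"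
      using fin finite_matchings_on by (auto intro!: finite_imageI)
    show "\<forall>i\<in>?N. \<forall>j\<in>?N. i \<noteq> j \<longrightarrow> ?I i \<inter> ?I j = {}"
    proof (intro ballI impI equals0I)
      fix i j M assume "i \<noteq> j" "M \<in> ?I i \<inter> ?I j"
      then obtain M' where M': "M' \<in> matchings_on E (S - {u, i})" and "{u, j} \<in> insert {u, i} M'"
        by (metis IntE imageE insertI1)
      then have "{u, j} \<in> M'"
        using \<open>i \<noteq> j\<close> by (auto simp: doubleton_eq_iff)
      then show False
        using matchings_on_Union_subset[OF M'] by auto
    qed
  qed
  finally show ?thesis
    by (simp add: sum_covering_edge sum_negf)
qed

lemma paths_induced_edges_subset:
  assumes "p \<in> paths (induced_edges E S) a b"
  shows "set p \<subseteq> insert a S"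
proof
  fix y assume "y \<in> set p"
  then obtain k where k: "k < length p" "y = p ! k"
    by (auto simp: in_set_conv_nth)
  show "y \<in> insert a S"
  proof (cases k)
    case 0
    then show ?thesis
      using assms k by (auto simp: paths_def hd_conv_nth)
  next
    case (Suc j)
    then have "{p ! j, p ! k} \<in> induced_edges E S"
      using assms k unfolding paths_def by auto
    then show ?thesis
      using k unfolding induced_edges_def by auto
  qed
qed

lemma finite_paths_induced_edges:
  assumes "finite S"
  shows "finite (paths (induced_edges E S) a b)"
proof (rule finite_subset)
  show "paths (induced_edges E S) a b
      \<subseteq> {xs. set xs \<subseteq> insert a S \<and> length xs \<le> card (insert a S)}"
  proof
    fix p assume p: "p \<in> paths (induced_edges E S) a b"
    then have "length p = card (set p)"
      unfolding paths_def by (simp add: distinct_card)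
    also have "\<dots> \<le> card (insert a S)"
      using paths_induced_edges_subset[OF p] assms by (intro card_mono) auto
    finally show "p \<in> {xs. set xs \<subseteq> insert a S \<and> length xs \<le> card (insert a S)}"
      using paths_induced_edges_subset[OF p] by simp
  qed
qed (use assms in \<open>simp add: finite_lists_length_le\<close>)

lemma paths_same_endpoints: "paths E v v = {[v]}"
proof (intro equalityI subsetI)
  fix p assume "p \<in> paths E v v"
  then have p: "p \<noteq> []" "hd p = v" "distinct p" "last p = v"
    unfolding paths_def by auto
  then obtain q where q: "p = v # q"
    by (cases p) auto
  have "q = []"
  proof (rule ccontr)
    assume "q \<noteq> []"
    then have "v \<in> set q"
      using p(4) q by (metis last_ConsR last_in_set)
    then show False
      using p(3) q by simp
  qed
  then show "p \<in> {[v]}"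
    using q by simp
qed (simp add: paths_def)

lemma path_weight_Cons:
  assumes "q \<noteq> []"
  shows "path_weight w (u # q) = cmod (w {u, hd q}) * path_weight w q"
proof -
  obtain n where n: "length q = Suc n"
    using assms by (cases q) auto
  have "path_weight w (u # q) = (\<Prod>k<Suc n. cmod (w {(u # q) ! k, (u # q) ! Suc k}))"
    unfolding path_weight_def using n by simp
  also have "\<dots> = cmod (w {u, q ! 0}) * (\<Prod>k<n. cmod (w {q ! k, q ! Suc k}))"
    by (subst prod.lessThan_Suc_shift) simp
  finally show ?thesis
    unfolding path_weight_def using n assms by (simp add: hd_conv_nth)
qed

lemma consecutive_edges_Cons:
  "(\<forall>k. Suc k < length (u # q) \<longrightarrow> {(u # q) ! k, (u # q) ! Suc k} \<in> F)
   \<longleftrightarrow> (q \<noteq> [] \<longrightarrow> {u, hd q} \<in> F) \<and> (\<forall>k. Suc k < length q \<longrightarrow> {q ! k, q ! Suc k} \<in> F)"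
  by (cases q) (auto simp: All_less_Suc2 less_Suc_eq_0_disj nth_Cons')

lemma Cons_in_paths_induced_edges_iff:
  assumes two: "\<forall>e\<in>E. card e = 2" and "u \<in> S" "u \<noteq> v"
  shows "u # q \<in> paths (induced_edges E S) u v
     \<longleftrightarrow> (\<exists>i\<in>S. {u, i} \<in> E \<and> q \<in> paths (induced_edges E (S - {u})) i v)"
proof
  assume p: "u # q \<in> paths (induced_edges E S) u v"
  then have "q \<noteq> []" "u \<notin> set q"
    using \<open>u \<noteq> v\<close> unfolding paths_def by auto
  moreover have "\<forall>k. Suc k < length (u # q) \<longrightarrow> {(u # q) ! k, (u # q) ! Suc k} \<in> induced_edges E S"
    using p unfolding paths_def by blast
  ultimately have "{u, hd q} \<in> induced_edges E S"
    and "\<forall>k. Suc k < length q \<longrightarrow> {q ! k, q ! Suc k} \<in> induced_edges E S"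
    unfolding consecutive_edges_Cons by auto
  moreover have "{q ! k, q ! Suc k} \<subseteq> set q" if "Suc k < length q" for k
    using that by auto
  ultimately have "q \<in> paths (induced_edges E (S - {u})) (hd q) v"
    using p \<open>q \<noteq> []\<close> \<open>u \<notin> set q\<close> unfolding paths_def induced_edges_def by fastforce
  then show "\<exists>i\<in>S. {u, i} \<in> E \<and> q \<in> paths (induced_edges E (S - {u})) i v"
    using \<open>{u, hd q} \<in> induced_edges E S\<close> unfolding induced_edges_def by auto
next
  assume "\<exists>i\<in>S. {u, i} \<in> E \<and> q \<in> paths (induced_edges E (S - {u})) i v"
  then obtain i where "i \<in> S" "{u, i} \<in> E" and q: "q \<in> paths (induced_edges E (S - {u})) i v"
    by blast
  moreover have "i \<noteq> u"
    using doubleton_in_edges_neq[OF two \<open>{u, i} \<in> E\<close>] .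
  ultimately have "u \<notin> set q"
    using paths_induced_edges_subset[OF q] by auto
  moreover have "q \<noteq> []" "hd q = i" "last q = v" "distinct q"
    and "\<forall>k. Suc k < length q \<longrightarrow> {q ! k, q ! Suc k} \<in> induced_edges E (S - {u})"
    using q unfolding paths_def by auto
  moreover have "induced_edges E (S - {u}) \<subseteq> induced_edges E S"
    unfolding induced_edges_def by auto
  moreover have "{u, i} \<in> induced_edges E S"
    using \<open>i \<in> S\<close> \<open>{u, i} \<in> E\<close> \<open>u \<in> S\<close> unfolding induced_edges_def by auto
  ultimately have "\<forall>k. Suc k < length (u # q) \<longrightarrow> {(u # q) ! k, (u # q) ! Suc k} \<in> induced_edges E S"
    unfolding consecutive_edges_Cons by blast
  then show "u # q \<in> paths (induced_edges E S) u v"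
    unfolding paths_def using \<open>u \<notin> set q\<close> \<open>last q = v\<close> \<open>distinct q\<close> \<open>q \<noteq> []\<close> by simp
qed

lemma sum_paths_induced_edges_first_step:
  assumes two: "\<forall>e\<in>E. card e = 2" and fin: "finite S" and "u \<in> S" "u \<noteq> v"
  shows "(\<Sum>p\<in>paths (induced_edges E S) u v. f p)
       = (\<Sum>i\<in>{i\<in>S. {u, i}\<in>E}. \<Sum>q\<in>paths (induced_edges E (S - {u})) i v. f (u # q))"
proof -
  let ?N = "{i\<in>S. {u, i}\<in>E}"
  let ?C = "\<lambda>i. (#) u ` paths (induced_edges E (S - {u})) i v"
  have paths_eq: "paths (induced_edges E S) u v = (\<Union>i\<in>?N. ?C i)"
  proof (intro equalityI subsetI)
    fix p assume p: "p \<in> paths (induced_edges E S) u v"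
    then have "p = u # tl p"
      unfolding paths_def by auto
    then show "p \<in> (\<Union>i\<in>?N. ?C i)"
      using p Cons_in_paths_induced_edges_iff[OF assms(1,3,4), of "tl p"] by auto
  next
    fix p assume "p \<in> (\<Union>i\<in>?N. ?C i)"
    then show "p \<in> paths (induced_edges E S) u v"
      using Cons_in_paths_induced_edges_iff[OF assms(1,3,4)] by auto
  qed
  have "(\<Sum>p\<in>paths (induced_edges E S) u v. f p) = (\<Sum>i\<in>?N. \<Sum>p\<in>?C i. f p)"
    unfolding paths_eq
  proof (rule sum.UNION_disjoint)
    show "finite ?N" "\<forall>i\<in>?N. finite (?C i)"
      using fin by (auto intro: finite_imageI finite_paths_induced_edges)
    show "\<forall>i\<in>?N. \<forall>j\<in>?N. i \<noteq> j \<longrightarrow> ?C i \<inter> ?C j = {}"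
      unfolding paths_def by auto
  qed
  then show ?thesis
    by (simp add: sum.reindex)
qed

lemma matching_sum_cross_expand:
  fixes w :: "'a set \<Rightarrow> complex" and z :: "'a \<Rightarrow> real"
  assumes two: "\<forall>e\<in>E. card e = 2" and fin: "finite S" and "u \<in> S" "u \<noteq> v"
  defines "Q \<equiv> matching_sum E w z" and "H \<equiv> S - {u}"
  shows "Q H * Q (S - {v}) - Q S * Q (H - {v})
       = (\<Sum>i\<in>{i\<in>S. {u, i}\<in>E}. cmod (w {u, i}) ^ 2 *
           (if i = v then Q (H - {v}) ^ 2 else Q (H - {i}) * Q (H - {v}) - Q H * Q (H - {i, v})))"
proof -
  let ?N = "{i\<in>S. {u, i}\<in>E}"
  let ?a = "\<lambda>i. cmod (w {u, i}) ^ 2"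
  let ?B = "\<lambda>i. if i \<noteq> v then ?a i * Q (H - {i, v}) else 0"
  have expand_S: "Q S = z u * Q H - (\<Sum>i\<in>?N. ?a i * Q (H - {i}))"
    using matching_sum_expand_vertex[OF two fin \<open>u \<in> S\<close>]
    unfolding Q_def H_def by (simp add: Diff_insert2[symmetric])
  have "Q (S - {v}) = z u * Q (H - {v}) - (\<Sum>i\<in>{i\<in>S - {v}. {u, i}\<in>E}. ?a i * Q (H - {i, v}))"
    using matching_sum_expand_vertex[OF two, of "S - {v}" u] fin \<open>u \<in> S\<close> \<open>u \<noteq> v\<close>
    unfolding Q_def H_def by (simp add: Diff_insert2[symmetric] insert_commute)
  also have "{i\<in>S - {v}. {u, i}\<in>E} = {i\<in>?N. i \<noteq> v}"
    by auto
  also have "(\<Sum>i\<in>{i\<in>?N. i \<noteq> v}. ?a i * Q (H - {i, v})) = (\<Sum>i\<in>?N. ?B i)"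
    using fin by (intro sum.inter_filter) simp
  finally have expand_S_minus_v: "Q (S - {v}) = z u * Q (H - {v}) - (\<Sum>i\<in>?N. ?B i)" .
  have "(\<Sum>i\<in>?N. ?a i * (if i = v then Q (H - {v}) ^ 2 else Q (H - {i}) * Q (H - {v}) - Q H * Q (H - {i, v})))
      = (\<Sum>i\<in>?N. ?a i * Q (H - {i}) * Q (H - {v}) - Q H * ?B i)"
    by (intro sum.cong) (auto simp: power2_eq_square algebra_simps)
  also have "\<dots> = (\<Sum>i\<in>?N. ?a i * Q (H - {i})) * Q (H - {v}) - Q H * (\<Sum>i\<in>?N. ?B i)"
    by (simp add: sum_subtractf sum_distrib_left sum_distrib_right)
  also have "\<dots> = Q H * Q (S - {v}) - Q S * Q (H - {v})"
    unfolding expand_S expand_S_minus_v by (simp add: algebra_simps)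
  finally show ?thesis ..
qed

lemma matching_sum_path_identity:
  assumes two: "\<forall>e\<in>E. card e = 2" and "finite S" "u \<in> S" "v \<in> S" "u \<noteq> v"
  shows "matching_sum E w z (S - {u}) * matching_sum E w z (S - {v})
           - matching_sum E w z S * matching_sum E w z (S - {u, v})
         = (\<Sum>p\<in>paths (induced_edges E S) u v. (path_weight w p * matching_sum E w z (S - set p)) ^ 2)"
  using assms(2-)
proof (induction S arbitrary: u v rule: finite_psubset_induct)
  case (psubset S)
  let ?Q = "matching_sum E w z"
  let ?H = "S - {u}"
  let ?a = "\<lambda>i. cmod (w {u, i}) ^ 2"
  let ?R = "\<lambda>i. \<Sum>q\<in>paths (induced_edges E ?H) i v. (path_weight w q * ?Q (?H - set q)) ^ 2"
  have "?Q ?H * ?Q (S - {v}) - ?Q S * ?Q (S - {u, v})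
      = (\<Sum>i\<in>{i\<in>S. {u, i}\<in>E}. ?a i *
          (if i = v then ?Q (?H - {v}) ^ 2 else ?Q (?H - {i}) * ?Q (?H - {v}) - ?Q ?H * ?Q (?H - {i, v})))"
    using matching_sum_cross_expand[OF two psubset.hyps(1) psubset.prems(1,3), of w z]
    unfolding Diff_insert2[of S u "{v}", symmetric] .
  also have "\<dots> = (\<Sum>i\<in>{i\<in>S. {u, i}\<in>E}. ?a i * ?R i)"
  proof (rule sum.cong[OF refl])
    fix i assume i: "i \<in> {i\<in>S. {u, i}\<in>E}"
    show "?a i * (if i = v then ?Q (?H - {v}) ^ 2 else ?Q (?H - {i}) * ?Q (?H - {v}) - ?Q ?H * ?Q (?H - {i, v}))
        = ?a i * ?R i"
    proof (cases "i = v")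
      case True
      then show ?thesis
        by (simp add: paths_same_endpoints path_weight_def)
    next
      case False
      have "i \<in> ?H" "v \<in> ?H" "?H \<subset> S"
        using i doubleton_in_edges_neq[OF two] psubset.prems by auto
      then show ?thesis
        using psubset.IH[of ?H i v] False by simp
    qed
  qed
  also have "\<dots> = (\<Sum>p\<in>paths (induced_edges E S) u v. (path_weight w p * ?Q (S - set p)) ^ 2)"
    unfolding sum_paths_induced_edges_first_step[OF two psubset.hyps(1) psubset.prems(1,3)] sum_distrib_left
  proof (intro sum.cong refl)
    fix i q assume "q \<in> paths (induced_edges E ?H) i v"
    then have "q \<noteq> []" "hd q = i"
      unfolding paths_def by auto
    moreover have "S - set (u # q) = ?H - set q"
      by auto
    ultimately show "?a i * (path_weight w q * ?Q (?H - set q)) ^ 2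
        = (path_weight w (u # q) * ?Q (S - set (u # q))) ^ 2"
      by (simp add: path_weight_Cons power_mult_distrib)
  qed
  finally show ?case .
qed

theorem lemma4p5:
  fixes V :: "'a set" and E :: "'a set set" and w :: "'a set \<Rightarrow> complex"
    and w1 :: "'a \<Rightarrow> real" and u v :: 'a and x :: real
  assumes "simple_graph V E"
    and "\<forall>e\<in>E. w e \<noteq> 0"
    and "u \<in> V" and "v \<in> V" and "u \<noteq> v"
  shows "eta_del V E w w1 {u} x * eta_del V E w w1 {v} x
           - eta_w V E w w1 x * eta_del V E w w1 {u, v} x
         = (\<Sum>p\<in>paths E u v. (path_weight w p * eta_del V E w w1 (set p) x) ^ 2)"
proof -
  \<comment> \<open>The identity holds for arbitrary weights.\<close>
  have "finite V" and edges: "\<forall>e\<in>E. \<exists>a b. a \<noteq> b \<and> a \<in> V \<and> b \<in> V \<and> e = {a, b}"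
    using assms(1) unfolding simple_graph_def by auto
  then have two: "\<forall>e\<in>E. card e = 2"
    by fastforce
  have "e \<subseteq> V" if "e \<in> E" for e
    using edges that by fastforce
  then have induced_all: "induced_edges E V = E"
    unfolding induced_edges_def by blast
  have eta_del: "eta_del V E w w1 X x = matching_sum E w (\<lambda>y. x - w1 y) (V - X)" for X
    unfolding eta_del_def using \<open>finite V\<close> by (simp add: eta_w_eq_matching_sum[OF two])
  have eta: "eta_w V E w w1 x = matching_sum E w (\<lambda>y. x - w1 y) V"
    using eta_w_eq_matching_sum[OF two \<open>finite V\<close>, of w w1 x] unfolding induced_all .
  show ?thesis
    using matching_sum_path_identity[OF two \<open>finite V\<close> assms(3-5), of w "\<lambda>y. x - w1 y"]
    unfolding eta_del eta induced_all .
qed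

end
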